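(* Let $K$ be a field, $s\ge2$, $S=K[t_1,\ldots,t_s]$, and let $\mathcal{L}\subset\mathbb{Z}^s$ be a homogeneous lattice of rank $s-1$. Let ${\rm in}(I(\mathcal{L}))$ be the initial ideal of $I(\mathcal{L})$ with respect to the reverse lexicographical order. Then for every $\widetilde{\alpha}=\alpha+\mathcal{L}$ in the torsion subgroup $T(\mathbb{Z}^s/\mathcal{L})$ there exists a unique $a=(a_1,\ldots,a_s)\in\mathbb{Z}^s$ such that (i) $a_i\ge0$ for $i=1,\ldots,s-1$; (ii) $t_1^{a_1}\cdots t_{s-1}^{a_{s-1}}\notin{\rm in}(I(\mathcal{L}))$; and (iii) $a+\mathcal{L}=\alpha+\mathcal{L}$.
   Context: A lattice is a subgroup of $\mathbb{Z}^s$; it is homogeneous if $\sum_i a_i=0$ for every $a\in\mathcal{L}$. For $a\in\mathbb{Z}^s$ write $a=a^+-a^-$ with $a^+,a^-\in\mathbb{N}^s$ of disjoint supports, $t^c=t_1^{c_1}\cdots t_s^{c_s}$, and $I(\mathcal{L})=(\{t^{a^+}-t^{a^-}: a\in\mathcal{L}\})$. The reverse lexicographical order on monomials is: $t^b\succ t^a$ iff the last nonzero entry of $b-a$ is negative. The initial ideal ${\rm in}(L)$ is generated by the leading terms of the polynomials of $L$. $T(M)$ denotes the torsion subgroup of $M$. *)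

theory Defs
  imports Main "HOL-Library.Poly_Mapping"
begin

text \<open>Indices are 0-based: the variables t_1..t_s of the paper are
  indexed 0..s-1 here. Integer vectors of Z^s are functions nat => int vanishing
  at indices >= s. Exponent vectors are finitely supported maps nat =>0 nat,
  and polynomials of K[t_1..t_s] are elements of (nat =>0 nat) =>0 K
  whose monomials only involve variables 0..s-1.\<close>

definition Zs :: "nat \<Rightarrow> (nat \<Rightarrow> int) set" where
  "Zs s = {a. \<forall>i\<ge>s. a i = 0}"

definition is_lattice :: "nat \<Rightarrow> (nat \<Rightarrow> int) set \<Rightarrow> bool" where
  "is_lattice s L \<longleftrightarrow> L \<subseteq> Zs s \<and> (\<lambda>_. 0) \<in> L \<and>
     (\<forall>a\<in>L. \<forall>b\<in>L. (\<lambda>i. a i + b i) \<in> L) \<and> (\<forall>a\<in>L. (\<lambda>i. - a i) \<in> L)"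

definition homogeneous_lattice :: "nat \<Rightarrow> (nat \<Rightarrow> int) set \<Rightarrow> bool" where
  "homogeneous_lattice s L \<longleftrightarrow> (\<forall>a\<in>L. (\<Sum>i<s. a i) = 0)"

definition int_lin_indep :: "nat \<Rightarrow> (nat \<Rightarrow> int) list \<Rightarrow> bool" where
  "int_lin_indep s vs \<longleftrightarrow>
     (\<forall>c :: nat \<Rightarrow> int. (\<forall>i<s. (\<Sum>j<length vs. c j * (vs ! j) i) = 0)
        \<longrightarrow> (\<forall>j<length vs. c j = 0))"

definition lattice_rank_eq :: "nat \<Rightarrow> (nat \<Rightarrow> int) set \<Rightarrow> nat \<Rightarrow> bool" where
  "lattice_rank_eq s L r \<longleftrightarrow>
     (\<exists>vs. length vs = r \<and> set vs \<subseteq> L \<and> int_lin_indep s vs) \<and>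
     (\<forall>vs. set vs \<subseteq> L \<and> int_lin_indep s vs \<longrightarrow> length vs \<le> r)"

definition pos_part :: "nat \<Rightarrow> (nat \<Rightarrow> int) \<Rightarrow> nat \<Rightarrow>\<^sub>0 nat" where
  "pos_part s a = Abs_poly_mapping (\<lambda>i. if i < s then nat (a i) else 0)"

definition neg_part :: "nat \<Rightarrow> (nat \<Rightarrow> int) \<Rightarrow> nat \<Rightarrow>\<^sub>0 nat" where
  "neg_part s a = Abs_poly_mapping (\<lambda>i. if i < s then nat (- a i) else 0)"

definition monomial_t :: "(nat \<Rightarrow>\<^sub>0 nat) \<Rightarrow> (nat \<Rightarrow>\<^sub>0 nat) \<Rightarrow>\<^sub>0 'k::field" where
  "monomial_t e = Poly_Mapping.single e 1"

definition polyring :: "nat \<Rightarrow> ((nat \<Rightarrow>\<^sub>0 nat) \<Rightarrow>\<^sub>0 'k::field) set" where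
  "polyring s = {f :: (nat \<Rightarrow>\<^sub>0 nat) \<Rightarrow>\<^sub>0 'k. \<forall>e \<in> Poly_Mapping.keys f. \<forall>i \<in> Poly_Mapping.keys e. i < s}"

definition ideal_gen :: "nat \<Rightarrow> ((nat \<Rightarrow>\<^sub>0 nat) \<Rightarrow>\<^sub>0 'k::field) set
    \<Rightarrow> ((nat \<Rightarrow>\<^sub>0 nat) \<Rightarrow>\<^sub>0 'k) set" where
  "ideal_gen s G = {f. \<exists>F c. finite F \<and> F \<subseteq> G \<and> (\<forall>g\<in>F. c g \<in> polyring s) \<and>
                         f = (\<Sum>g\<in>F. c g * g)}"

definition lattice_ideal :: "nat \<Rightarrow> (nat \<Rightarrow> int) set \<Rightarrow> ((nat \<Rightarrow>\<^sub>0 nat) \<Rightarrow>\<^sub>0 'k::field) set" where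
  "lattice_ideal s L = ideal_gen s {monomial_t (pos_part s a) - monomial_t (neg_part s a) | a. a \<in> L}"

definition revlex_gt :: "nat \<Rightarrow> (nat \<Rightarrow>\<^sub>0 nat) \<Rightarrow> (nat \<Rightarrow>\<^sub>0 nat) \<Rightarrow> bool" where
  "revlex_gt s b a \<longleftrightarrow> (\<exists>j<s. Poly_Mapping.lookup b j < Poly_Mapping.lookup a j \<and>
       (\<forall>i. j < i \<and> i < s \<longrightarrow> Poly_Mapping.lookup b i = Poly_Mapping.lookup a i))"

definition lead_exp :: "nat \<Rightarrow> ((nat \<Rightarrow>\<^sub>0 nat) \<Rightarrow>\<^sub>0 'k::field) \<Rightarrow> nat \<Rightarrow>\<^sub>0 nat" where
  "lead_exp s f = (THE e. e \<in> Poly_Mapping.keys f \<and> (\<forall>e'\<in>Poly_Mapping.keys f. e' \<noteq> e \<longrightarrow> revlex_gt s e e'))"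

definition initial_ideal :: "nat \<Rightarrow> ((nat \<Rightarrow>\<^sub>0 nat) \<Rightarrow>\<^sub>0 'k::field) set
    \<Rightarrow> ((nat \<Rightarrow>\<^sub>0 nat) \<Rightarrow>\<^sub>0 'k) set" where
  "initial_ideal s J = ideal_gen s {monomial_t (lead_exp s f) | f. f \<in> J \<and> f \<noteq> 0}"

end

theory Submission
  imports Defs
begin

text \<open>Exponents congruent modulo \<open>L\<close> form the fibres of the \<open>\<int>\<^sup>s/L\<close>-grading of \<open>S\<close>, and
  \<open>I(L)\<close> is generated by binomials homogeneous for it, so on each fibre the coefficients
  of an element of \<open>I(L)\<close> sum to zero. Hence \<open>t\<^sup>m \<in> in(I(L))\<close> iff some exponent
  congruent to \<open>m\<close> is revlex-smaller: the standard monomials are the revlex-least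
  elements of their fibres.

  For a torsion class \<open>\<alpha> + L\<close> consider the exponents \<open>c\<close> with \<open>c - d e\<^sub>s \<in> \<alpha> + L\<close>.
  Since \<open>L\<close> is homogeneous they all have degree \<open>d\<close>, so there are finitely many, and since
  \<open>L\<close> has finite index in the degree-zero hyperplane there are some for large \<open>d\<close>. The
  revlex-least one for the least such \<open>d\<close> does not involve \<open>t\<^sub>s\<close> (otherwise divide by
  \<open>t\<^sub>s\<close>), which gives the representative. Revlex compares the exponent of \<open>t\<^sub>s\<close> first,
  so two representatives have the same last coordinate and are then revlex-least in the
  same fibre, hence equal.\<close>

section \<open>Lattices\<close>

lemma lattice_zero: "is_lattice s L \<Longrightarrow> (\<lambda>_. 0) \<in> L"
  by (simp add: is_lattice_def)

lemma lattice_add: "is_lattice s L \<Longrightarrow> a \<in> L \<Longrightarrow> b \<in> L \<Longrightarrow> (\<lambda>i. a i + b i) \<in> L"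
  by (simp add: is_lattice_def)

lemma lattice_uminus: "is_lattice s L \<Longrightarrow> a \<in> L \<Longrightarrow> (\<lambda>i. - a i) \<in> L"
  by (simp add: is_lattice_def)

lemma lattice_diff: "is_lattice s L \<Longrightarrow> a \<in> L \<Longrightarrow> b \<in> L \<Longrightarrow> (\<lambda>i. a i - b i) \<in> L"
  using lattice_add[of s L a "\<lambda>i. - b i"] lattice_uminus[of s L b] by simp

lemma lattice_vanishes: "is_lattice s L \<Longrightarrow> a \<in> L \<Longrightarrow> s \<le> i \<Longrightarrow> a i = 0"
  by (auto simp: is_lattice_def Zs_def)

lemma lattice_smult_nat: "is_lattice s L \<Longrightarrow> a \<in> L \<Longrightarrow> (\<lambda>i. int k * a i) \<in> L"
proof (induction k)
  case 0
  then show ?case using lattice_zero by simp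
next
  case (Suc k)
  then have "(\<lambda>i. int k * a i + a i) \<in> L"
    using lattice_add[of s L "\<lambda>i. int k * a i" a] by simp
  then show ?case by (simp add: algebra_simps)
qed

lemma lattice_smult:
  assumes "is_lattice s L" "a \<in> L"
  shows "(\<lambda>i. k * a i) \<in> L"
proof (cases "k \<ge> 0")
  case True
  then show ?thesis using lattice_smult_nat[OF assms, of "nat k"] by simp
next
  case False
  then show ?thesis
    using lattice_uminus[OF assms(1) lattice_smult_nat[OF assms, of "nat (- k)"]] by simp
qed

lemma lattice_sum:
  assumes "is_lattice s L" "finite A" "\<And>j. j \<in> A \<Longrightarrow> f j \<in> L"
  shows "(\<lambda>i. \<Sum>j\<in>A. f j i) \<in> L"
  using assms(2,3)
proof (induction A rule: finite_induct)
  case empty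
  then show ?case using lattice_zero[OF assms(1)] by simp
next
  case (insert x F)
  then show ?case using lattice_add[OF assms(1), of "f x" "\<lambda>i. \<Sum>j\<in>F. f j i"] by simp
qed

lemma int_vectors_dependent:
  "finite J \<Longrightarrow> n < card J \<Longrightarrow> (\<forall>j\<in>J. \<forall>i\<ge>n. v j i = (0::int)) \<Longrightarrow>
    \<exists>c. (\<exists>j\<in>J. c j \<noteq> 0) \<and> (\<forall>i. (\<Sum>j\<in>J. c j * v j i) = 0)"
proof (induction n arbitrary: J v)
  case 0
  then obtain j0 where "j0 \<in> J" by fastforce
  then show ?case using 0 by (intro exI[of _ "\<lambda>j. if j = j0 then 1 else 0"]) auto
next
  case (Suc n)
  show ?case
  proof (cases "\<forall>j\<in>J. v j n = 0")
    case True
    then have "\<forall>j\<in>J. \<forall>i\<ge>n. v j i = 0" using Suc.prems(3)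
      by (metis Suc_leI le_neq_implies_less)
    then show ?thesis using Suc.IH[of J v] Suc.prems by simp
  next
    case False
    then obtain k where k: "k \<in> J" "v k n \<noteq> 0" by auto
    define J' where "J' = J - {k}"
    define w where "w j i = v k n * v j i - v j n * v k i" for j i
    have "\<forall>j\<in>J'. \<forall>i\<ge>n. w j i = 0"
    proof (intro ballI allI impI)
      fix j i assume "j \<in> J'" "n \<le> i"
      then show "w j i = 0"
        using Suc.prems(3) k(1) by (cases "i = n") (auto simp: w_def J'_def)
    qed
    moreover have "finite J'" "n < card J'" using Suc.prems k by (simp_all add: J'_def)
    ultimately obtain c' where c': "\<exists>j\<in>J'. c' j \<noteq> 0" "\<forall>i. (\<Sum>j\<in>J'. c' j * w j i) = 0"
      using Suc.IH[of J' w] by blast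
    define c where "c j = (if j = k then - (\<Sum>j\<in>J'. c' j * v j n) else v k n * c' j)" for j
    have "\<exists>j\<in>J. c j \<noteq> 0"
      using c'(1) k by (auto simp: c_def J'_def)
    moreover have "(\<Sum>j\<in>J. c j * v j i) = 0" for i
    proof -
      have "(\<Sum>j\<in>J. c j * v j i) = c k * v k i + (\<Sum>j\<in>J'. c j * v j i)"
        using k Suc.prems(1) by (simp add: J'_def sum.remove)
      also have "(\<Sum>j\<in>J'. c j * v j i) = (\<Sum>j\<in>J'. v k n * c' j * v j i)"
        by (rule sum.cong) (auto simp: c_def J'_def)
      also have "c k * v k i = - (\<Sum>j\<in>J'. c' j * v j n * v k i)"
        by (simp add: c_def sum_distrib_right)
      finally have "(\<Sum>j\<in>J. c j * v j i) = (\<Sum>j\<in>J'. c' j * w j i)"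
        by (simp add: w_def algebra_simps sum_subtractf sum_negf)
      then show ?thesis using c'(2) by simp
    qed
    ultimately show ?thesis by blast
  qed
qed

text \<open>A homogeneous lattice of rank \<open>s - 1\<close> has finite index in the hyperplane
  \<open>\<Sum>i h i = 0\<close>: adjoining \<open>h\<close> to a basis gives \<open>s\<close> vectors in that \<open>(s-1)\<close>-dimensional
  hyperplane, and in the resulting relation the coefficient of \<open>h\<close> cannot vanish.\<close>

lemma homogeneous_vector_multiple_in_lattice:
  assumes s2: "s \<ge> 2" and lat: "is_lattice s L" and hom: "homogeneous_lattice s L"
    and rk: "lattice_rank_eq s L (s - 1)" and hZ: "h \<in> Zs s" and hs: "(\<Sum>i<s. h i) = 0"
  shows "\<exists>m::int. m > 0 \<and> (\<lambda>i. m * h i) \<in> L"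
proof -
  obtain vs where vs: "length vs = s - 1" "set vs \<subseteq> L" "int_lin_indep s vs"
    using rk by (auto simp: lattice_rank_eq_def)
  define v where "v j = (if j < s - 1 then vs ! j else h)" for j
  have vL: "j < s - 1 \<Longrightarrow> v j \<in> L" for j using vs by (auto simp: v_def)
  have vZ: "j < s \<Longrightarrow> s \<le> i \<Longrightarrow> v j i = 0" for j i
    using vL lattice_vanishes[OF lat] hZ by (cases "j < s - 1") (auto simp: v_def Zs_def)
  have vsum: "j < s \<Longrightarrow> (\<Sum>i<s. v j i) = 0" for j
    using vL hom hs by (cases "j < s - 1") (auto simp: v_def homogeneous_lattice_def)
  obtain c where c: "\<exists>j\<in>{..<s}. c j \<noteq> 0"
      "\<forall>i. (\<Sum>j<s. c j * (if i < s - 1 then v j i else 0)) = 0"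
    using int_vectors_dependent[of "{..<s}" "s - 1" "\<lambda>j i. if i < s - 1 then v j i else 0"] s2
    by auto
  have sS: "{..<s} = insert (s - 1) {..<s - 1}" using s2 by auto
  define T where "T i = (\<Sum>j<s. c j * v j i)" for i
  have T_front: "i < s - 1 \<Longrightarrow> T i = 0" for i using c(2)[rule_format, of i] by (simp add: T_def)
  have T_beyond: "s \<le> i \<Longrightarrow> T i = 0" for i using vZ by (simp add: T_def)
  have "(\<Sum>i<s. T i) = (\<Sum>j<s. c j * (\<Sum>i<s. v j i))"
    unfolding T_def sum_distrib_left by (rule sum.swap)
  also have "\<dots> = 0" using vsum by simp
  finally have "T (s - 1) = 0" using T_front by (simp add: sS)
  then have T0: "T i = 0" for i using T_front T_beyond
    by (cases "i < s - 1"; cases "i = s - 1") auto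
  have T_split: "T i = (\<Sum>j<s - 1. c j * (vs ! j) i) + c (s - 1) * h i" for i
    by (simp add: T_def sS v_def)
  have cnz: "c (s - 1) \<noteq> 0"
  proof
    assume c0: "c (s - 1) = 0"
    then have "\<forall>i<s. (\<Sum>j<length vs. c j * (vs ! j) i) = 0" using T0 T_split vs(1) by simp
    then have "\<forall>j<s - 1. c j = 0" using vs by (auto simp: int_lin_indep_def)
    then show False using c(1) c0 sS by auto
  qed
  have "(\<lambda>i. c (s - 1) * h i) = (\<lambda>i. - (\<Sum>j\<in>{..<s - 1}. c j * (vs ! j) i))"
    using T0 T_split by (simp add: fun_eq_iff eq_neg_iff_add_eq_0 add.commute)
  also have "\<dots> \<in> L"
    using vs by (intro lattice_uminus[OF lat] lattice_sum[OF lat] lattice_smult[OF lat]) auto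
  finally have "(\<lambda>i. c (s - 1) * (c (s - 1) * h i)) \<in> L" by (rule lattice_smult[OF lat])
  then show ?thesis using cnz
    by (intro exI[of _ "c (s - 1) * c (s - 1)"]) (auto simp: mult.assoc zero_less_mult_iff linorder_neq_iff)
qed

section \<open>Exponent vectors and the reverse lexicographic order\<close>

definition supp_below :: "nat \<Rightarrow> (nat \<Rightarrow>\<^sub>0 nat) \<Rightarrow> bool" where
  "supp_below s e \<longleftrightarrow> (\<forall>i\<ge>s. Poly_Mapping.lookup e i = 0)"

definition exp_of :: "nat \<Rightarrow> (nat \<Rightarrow> nat) \<Rightarrow> nat \<Rightarrow>\<^sub>0 nat" where
  "exp_of s f = Abs_poly_mapping (\<lambda>i. if i < s then f i else 0)"

lemma lookup_exp_of: "Poly_Mapping.lookup (exp_of s f) i = (if i < s then f i else 0)"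
proof -
  have "finite {i. (if i < s then f i else 0) \<noteq> 0}"
    by (rule finite_subset[of _ "{..<s}"]) auto
  then show ?thesis by (simp add: exp_of_def)
qed

lemma supp_below_exp_of: "t \<le> s \<Longrightarrow> supp_below s (exp_of t f)"
  by (simp add: supp_below_def lookup_exp_of)

lemma supp_below_add: "supp_below s a \<Longrightarrow> supp_below s b \<Longrightarrow> supp_below s (a + b)"
  by (simp add: supp_below_def lookup_add)

lemma lookup_pos_part: "Poly_Mapping.lookup (pos_part s a) i = (if i < s then nat (a i) else 0)"
  using lookup_exp_of[of s "\<lambda>i. nat (a i)"] by (simp add: exp_of_def pos_part_def)

lemma lookup_neg_part: "Poly_Mapping.lookup (neg_part s a) i = (if i < s then nat (- a i) else 0)"
  using lookup_exp_of[of s "\<lambda>i. nat (- a i)"] by (simp add: exp_of_def neg_part_def)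

lemma supp_below_pos_part: "supp_below s (pos_part s a)"
  by (simp add: supp_below_def lookup_pos_part)

lemma supp_below_neg_part: "supp_below s (neg_part s a)"
  by (simp add: supp_below_def lookup_neg_part)

definition lattice_cong :: "(nat \<Rightarrow> int) set \<Rightarrow> (nat \<Rightarrow>\<^sub>0 nat) \<Rightarrow> (nat \<Rightarrow>\<^sub>0 nat) \<Rightarrow> bool" where
  "lattice_cong L x y \<longleftrightarrow>
     (\<lambda>i. int (Poly_Mapping.lookup x i) - int (Poly_Mapping.lookup y i)) \<in> L"

lemma lattice_cong_refl: "is_lattice s L \<Longrightarrow> lattice_cong L x x"
  using lattice_zero by (simp add: lattice_cong_def)

lemma lattice_cong_sym: "is_lattice s L \<Longrightarrow> lattice_cong L x y \<Longrightarrow> lattice_cong L y x"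
  using lattice_uminus[of s L "\<lambda>i. int (Poly_Mapping.lookup x i) - int (Poly_Mapping.lookup y i)"]
  by (simp add: lattice_cong_def)

lemma lattice_cong_trans:
  "is_lattice s L \<Longrightarrow> lattice_cong L x y \<Longrightarrow> lattice_cong L y z \<Longrightarrow> lattice_cong L x z"
  using lattice_add[of s L "\<lambda>i. int (Poly_Mapping.lookup x i) - int (Poly_Mapping.lookup y i)"
     "\<lambda>i. int (Poly_Mapping.lookup y i) - int (Poly_Mapping.lookup z i)"]
  by (simp add: lattice_cong_def)

lemma lattice_cong_add_right: "lattice_cong L (x + r) (y + r) \<longleftrightarrow> lattice_cong L x y"
  by (simp add: lattice_cong_def lookup_add)

lemma lattice_cong_binomial:
  assumes "a \<in> Zs s"
  shows "lattice_cong L (m + pos_part s a) (m + neg_part s a) \<longleftrightarrow> a \<in> L"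
proof -
  have "(\<lambda>i. int (Poly_Mapping.lookup (m + pos_part s a) i)
      - int (Poly_Mapping.lookup (m + neg_part s a) i)) = a"
    using assms by (auto simp: fun_eq_iff lookup_add lookup_pos_part lookup_neg_part Zs_def)
  then show ?thesis by (simp add: lattice_cong_def)
qed

lemma revlex_irrefl: "\<not> revlex_gt s e e"
  by (simp add: revlex_gt_def)

lemma revlex_asym: assumes "revlex_gt s a b" shows "\<not> revlex_gt s b a"
proof
  assume "revlex_gt s b a"
  then obtain k where k: "k < s" "Poly_Mapping.lookup b k < Poly_Mapping.lookup a k"
    "\<forall>i. k < i \<and> i < s \<longrightarrow> Poly_Mapping.lookup b i = Poly_Mapping.lookup a i"
    by (auto simp: revlex_gt_def)
  obtain j where j: "j < s" "Poly_Mapping.lookup a j < Poly_Mapping.lookup b j"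
    "\<forall>i. j < i \<and> i < s \<longrightarrow> Poly_Mapping.lookup a i = Poly_Mapping.lookup b i"
    using assms by (auto simp: revlex_gt_def)
  show False
  proof (cases j k rule: linorder_cases)
    case less
    then have "Poly_Mapping.lookup a k = Poly_Mapping.lookup b k" using j(3) k(1) by blast
    then show False using k(2) by simp
  next
    case equal then show False using j(2) k(2) by simp
  next
    case greater
    then have "Poly_Mapping.lookup b j = Poly_Mapping.lookup a j" using k(3) j(1) by blast
    then show False using j(2) by simp
  qed
qed

lemma revlex_trans: assumes "revlex_gt s a b" "revlex_gt s b c" shows "revlex_gt s a c"
proof -
  obtain j where j: "j < s" "Poly_Mapping.lookup a j < Poly_Mapping.lookup b j"
    "\<forall>i. j < i \<and> i < s \<longrightarrow> Poly_Mapping.lookup a i = Poly_Mapping.lookup b i"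
    using assms by (auto simp: revlex_gt_def)
  obtain k where k: "k < s" "Poly_Mapping.lookup b k < Poly_Mapping.lookup c k"
    "\<forall>i. k < i \<and> i < s \<longrightarrow> Poly_Mapping.lookup b i = Poly_Mapping.lookup c i"
    using assms by (auto simp: revlex_gt_def)
  show ?thesis
  proof (cases j k rule: linorder_cases)
    case less
    have "Poly_Mapping.lookup a k = Poly_Mapping.lookup b k" using j(3) less k(1) by blast
    moreover have "\<forall>i. k < i \<and> i < s \<longrightarrow> Poly_Mapping.lookup a i = Poly_Mapping.lookup c i"
      using j(3) k(3) less by force
    ultimately show ?thesis using k(1,2) unfolding revlex_gt_def by (intro exI[of _ k]) simp
  next
    case equal
    have "\<forall>i. k < i \<and> i < s \<longrightarrow> Poly_Mapping.lookup a i = Poly_Mapping.lookup c i"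
      using j(3) k(3) equal by force
    moreover have "Poly_Mapping.lookup a k < Poly_Mapping.lookup c k" using j(2) k(2) equal by simp
    ultimately show ?thesis using k(1) unfolding revlex_gt_def by (intro exI[of _ k]) simp
  next
    case greater
    have "Poly_Mapping.lookup b j = Poly_Mapping.lookup c j" using k(3) greater j(1) by blast
    moreover have "\<forall>i. j < i \<and> i < s \<longrightarrow> Poly_Mapping.lookup a i = Poly_Mapping.lookup c i"
      using j(3) k(3) greater by force
    ultimately show ?thesis using j(1,2) unfolding revlex_gt_def by (intro exI[of _ j]) simp
  qed
qed

lemma revlex_total:
  assumes "supp_below s a" "supp_below s b" "a \<noteq> b"
  shows "revlex_gt s a b \<or> revlex_gt s b a"
proof -
  define P where "P j \<longleftrightarrow> j < s \<and> Poly_Mapping.lookup a j \<noteq> Poly_Mapping.lookup b j" for j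
  obtain k where k: "Poly_Mapping.lookup a k \<noteq> Poly_Mapping.lookup b k"
    using assms(3) poly_mapping_eqI by metis
  then have "P k" using assms(1,2) unfolding P_def supp_below_def by (metis not_less)
  have bound: "P y \<Longrightarrow> y \<le> s" for y by (simp add: P_def)
  define j where "j = (GREATEST j. P j)"
  have Pj: "P j" unfolding j_def using \<open>P k\<close> bound by (rule GreatestI_nat)
  have above: "Poly_Mapping.lookup a i = Poly_Mapping.lookup b i" if "j < i" "i < s" for i
  proof (rule ccontr)
    assume "Poly_Mapping.lookup a i \<noteq> Poly_Mapping.lookup b i"
    then have "P i" using that(2) by (simp add: P_def)
    then have "i \<le> j" unfolding j_def using bound by (rule Greatest_le_nat)
    then show False using that(1) by simp
  qed
  show ?thesis
  proof (cases "Poly_Mapping.lookup a j < Poly_Mapping.lookup b j")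
    case True
    then show ?thesis using Pj above unfolding revlex_gt_def P_def by blast
  next
    case False
    then have "Poly_Mapping.lookup b j < Poly_Mapping.lookup a j" using Pj by (simp add: P_def)
    then show ?thesis using Pj above unfolding revlex_gt_def P_def by (metis (full_types))
  qed
qed

lemma revlex_add_right: "revlex_gt s (a + r) (b + r) \<longleftrightarrow> revlex_gt s a b"
  by (simp add: revlex_gt_def lookup_add)

lemma finite_has_greatest_wrt:
  "finite S \<Longrightarrow> S \<noteq> {} \<Longrightarrow> (\<forall>x\<in>S.\<forall>y\<in>S.\<forall>z\<in>S. R x y \<longrightarrow> R y z \<longrightarrow> R x z) \<Longrightarrow>
   (\<forall>x\<in>S. \<forall>y\<in>S. x \<noteq> y \<longrightarrow> R x y \<or> R y x) \<Longrightarrow> \<exists>x\<in>S. \<forall>y\<in>S. y \<noteq> x \<longrightarrow> R x y"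
proof (induction S rule: finite_ne_induct)
  case (singleton x) then show ?case by auto
next
  case (insert x F)
  have "\<exists>m\<in>F. \<forall>y\<in>F. y \<noteq> m \<longrightarrow> R m y"
    apply (rule insert.IH)
    using insert.prems(1) apply (simp only: Ball_def insert_iff) apply meson
    using insert.prems(2) apply (simp only: Ball_def insert_iff) apply meson done
  then obtain m where m: "m \<in> F" "\<forall>y\<in>F. y \<noteq> m \<longrightarrow> R m y" by blast
  have "x \<noteq> m" using insert.hyps m(1) by blast
  show ?case
  proof (cases "R x m")
    case True
    have "R x y" if "y \<in> insert x F" "y \<noteq> x" for y
    proof (cases "y = m")
      case True then show ?thesis using \<open>R x m\<close> by simp
    next
      case False
      then have "R m y" using m that by auto
      moreover have "x \<in> insert x F" "m \<in> insert x F" using m by auto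
      ultimately show ?thesis using insert.prems(1)[rule_format, of x m y] \<open>R x m\<close> that(1) by simp
    qed
    then show ?thesis by blast
  next
    case False
    then have "R m x" using insert.prems(2)[rule_format, of x m] m \<open>x \<noteq> m\<close> by simp
    then show ?thesis using m by (intro bexI[of _ m]) auto
  qed
qed

section \<open>Polynomials and the initial ideal\<close>

lemma polyring_keys_supp_below: assumes "f \<in> polyring s" "e \<in> Poly_Mapping.keys f" shows "supp_below s e"
  unfolding supp_below_def
proof (intro allI impI)
  fix i assume "s \<le> i"
  show "Poly_Mapping.lookup e i = 0"
  proof (rule ccontr)
    assume "Poly_Mapping.lookup e i \<noteq> 0"
    then have "i \<in> Poly_Mapping.keys e" by (simp add: in_keys_iff)
    then have "i < s" using assms by (auto simp: polyring_def)
    then show False using \<open>s \<le> i\<close> by simp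
  qed
qed

lemma polyringI: assumes "\<And>e. e \<in> Poly_Mapping.keys f \<Longrightarrow> supp_below s e" shows "f \<in> polyring s"
  unfolding polyring_def
proof (intro CollectI ballI)
  fix e i assume "e \<in> Poly_Mapping.keys f" "i \<in> Poly_Mapping.keys e"
  show "i < s"
  proof (rule ccontr)
    assume "\<not> i < s"
    then have "Poly_Mapping.lookup e i = 0" using assms[OF \<open>e \<in> _\<close>] by (simp add: supp_below_def)
    then show False using \<open>i \<in> Poly_Mapping.keys e\<close> by (simp add: in_keys_iff)
  qed
qed

lemma polyring_add: "f \<in> polyring s \<Longrightarrow> g \<in> polyring s \<Longrightarrow> f + g \<in> polyring s"
  by (rule polyringI) (use keys_add[of f g] polyring_keys_supp_below in blast)

lemma polyring_diff: "f \<in> polyring s \<Longrightarrow> g \<in> polyring s \<Longrightarrow> f - g \<in> polyring s"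
  by (rule polyringI) (use keys_diff[of f g] polyring_keys_supp_below in blast)

lemma polyring_mult: "f \<in> polyring s \<Longrightarrow> g \<in> polyring s \<Longrightarrow> f * g \<in> polyring s"
  by (rule polyringI) (use keys_mult[of f g] polyring_keys_supp_below supp_below_add in blast)

lemma polyring_zero: "0 \<in> polyring s"
  by (simp add: polyring_def)

lemma polyring_sum:
  "finite A \<Longrightarrow> (\<And>x. x \<in> A \<Longrightarrow> f x \<in> polyring s) \<Longrightarrow> (\<Sum>x\<in>A. f x) \<in> polyring s"
  by (induction A rule: finite_induct) (auto intro: polyring_add polyring_zero)

lemma polyring_monomial: "supp_below s e \<Longrightarrow> (monomial_t e :: _ \<Rightarrow>\<^sub>0 'k::field) \<in> polyring s"
  by (rule polyringI) (simp add: monomial_t_def)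

lemma polyring_one: "(1 :: (nat \<Rightarrow>\<^sub>0 nat) \<Rightarrow>\<^sub>0 'k::field) \<in> polyring s"
  by (rule polyringI) (simp add: supp_below_def)

lemma ideal_gen_subset_polyring: "G \<subseteq> polyring s \<Longrightarrow> ideal_gen s G \<subseteq> polyring s"
  by (auto simp: ideal_gen_def intro!: polyring_sum polyring_mult)

lemma lattice_ideal_subset_polyring: "lattice_ideal s L \<subseteq> polyring s"
  unfolding lattice_ideal_def
  by (rule ideal_gen_subset_polyring)
     (auto intro!: polyring_diff polyring_monomial supp_below_pos_part supp_below_neg_part)

lemma monomial_in_ideal_gen: "(g :: _ \<Rightarrow>\<^sub>0 'k::field) \<in> G \<Longrightarrow> g \<in> ideal_gen s G"
  unfolding ideal_gen_def using polyring_one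
  by (intro CollectI exI[of _ "{g}"] exI[of _ "\<lambda>_. 1"]) auto

definition coeff_sum_on :: "((nat \<Rightarrow>\<^sub>0 nat) \<Rightarrow> bool) \<Rightarrow> ((nat \<Rightarrow>\<^sub>0 nat) \<Rightarrow>\<^sub>0 'k::field) \<Rightarrow> 'k" where
  "coeff_sum_on P h = (\<Sum>e\<in>{e\<in>Poly_Mapping.keys h. P e}. Poly_Mapping.lookup h e)"

lemma coeff_sum_on_superset:
  assumes "finite S" "Poly_Mapping.keys h \<subseteq> S"
  shows "coeff_sum_on P h = (\<Sum>e\<in>{e\<in>S. P e}. Poly_Mapping.lookup h e)"
  unfolding coeff_sum_on_def
  by (rule sum.mono_neutral_left) (use assms in \<open>auto simp: in_keys_iff\<close>)

lemma coeff_sum_on_add: "coeff_sum_on P (f + g) = coeff_sum_on P f + coeff_sum_on P g"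
proof -
  let ?S = "Poly_Mapping.keys f \<union> Poly_Mapping.keys g"
  have "coeff_sum_on P (f + g) = (\<Sum>e\<in>{e\<in>?S. P e}. Poly_Mapping.lookup (f + g) e)"
    by (rule coeff_sum_on_superset) (auto simp: keys_add)
  moreover have "coeff_sum_on P f = (\<Sum>e\<in>{e\<in>?S. P e}. Poly_Mapping.lookup f e)"
    by (rule coeff_sum_on_superset) auto
  moreover have "coeff_sum_on P g = (\<Sum>e\<in>{e\<in>?S. P e}. Poly_Mapping.lookup g e)"
    by (rule coeff_sum_on_superset) auto
  ultimately show ?thesis by (simp add: lookup_add sum.distrib)
qed

lemma coeff_sum_on_zero: "coeff_sum_on P 0 = 0"
  by (simp add: coeff_sum_on_def)

lemma coeff_sum_on_diff: "coeff_sum_on P (f - g) = coeff_sum_on P f - coeff_sum_on P g"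
  using coeff_sum_on_add[of P "f - g" g] by simp

lemma coeff_sum_on_single: "coeff_sum_on P (Poly_Mapping.single k v) = (if P k then v else 0)"
proof -
  have "coeff_sum_on P (Poly_Mapping.single k v)
      = (\<Sum>e\<in>{e\<in>{k}. P e}. Poly_Mapping.lookup (Poly_Mapping.single k v) e)"
    by (rule coeff_sum_on_superset) auto
  also have "{e\<in>{k}. P e} = (if P k then {k} else {})" by auto
  finally show ?thesis by simp
qed

lemma coeff_sum_on_sum:
  "finite A \<Longrightarrow> coeff_sum_on P (\<Sum>x\<in>A. f x) = (\<Sum>x\<in>A. coeff_sum_on P (f x))"
  by (induction A rule: finite_induct) (simp_all add: coeff_sum_on_zero coeff_sum_on_add)

lemma update_eq_add_single:
  "a \<notin> Poly_Mapping.keys f \<Longrightarrow> Poly_Mapping.update a b f = f + Poly_Mapping.single a b"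
  by (rule poly_mapping_eqI) (auto simp: lookup_update lookup_add lookup_single in_keys_iff)

lemma coeff_sum_on_mult_binomial:
  fixes h :: "(nat \<Rightarrow>\<^sub>0 nat) \<Rightarrow>\<^sub>0 'k::field"
  assumes "\<And>m. P (m + p) = P (m + q)"
  shows "coeff_sum_on P (h * (monomial_t p - monomial_t q)) = 0"
proof (induction h rule: update_induct)
  case const
  then show ?case by (simp add: coeff_sum_on_zero)
next
  case (update f a b)
  have "coeff_sum_on P (Poly_Mapping.single a b * (monomial_t p - monomial_t q)) = 0"
    using assms[of a]
    by (simp add: monomial_t_def right_diff_distrib mult_single coeff_sum_on_diff coeff_sum_on_single)
  then show ?case using update by (simp add: update_eq_add_single distrib_right coeff_sum_on_add)
qed

lemma lattice_ideal_coeff_sum_on_class: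
  fixes f :: "(nat \<Rightarrow>\<^sub>0 nat) \<Rightarrow>\<^sub>0 'k::field"
  assumes lat: "is_lattice s L" and f: "f \<in> lattice_ideal s L"
  shows "coeff_sum_on (\<lambda>e'. lattice_cong L e' e) f = 0"
proof -
  obtain F c where F: "finite F"
      "F \<subseteq> {monomial_t (pos_part s a) - monomial_t (neg_part s a) | a. a \<in> L}"
      "f = (\<Sum>g\<in>F. c g * g)"
    using f by (auto simp: lattice_ideal_def ideal_gen_def)
  have "coeff_sum_on (\<lambda>e'. lattice_cong L e' e) (c g * g) = 0" if "g \<in> F" for g
  proof -
    obtain a where a: "a \<in> L" "g = monomial_t (pos_part s a) - monomial_t (neg_part s a)"
      using F(2) \<open>g \<in> F\<close> by blast
    have "a \<in> Zs s" using a(1) lat by (auto simp: is_lattice_def)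
    then have "lattice_cong L (m + pos_part s a) (m + neg_part s a)" for m
      using lattice_cong_binomial a(1) by blast
    then have "lattice_cong L (m + pos_part s a) e = lattice_cong L (m + neg_part s a) e" for m
      using lattice_cong_trans[OF lat] lattice_cong_sym[OF lat] by blast
    then show ?thesis unfolding a(2) by (rule coeff_sum_on_mult_binomial)
  qed
  then show ?thesis using F by (simp add: coeff_sum_on_sum)
qed

lemma lead_exp_spec:
  fixes f :: "(nat \<Rightarrow>\<^sub>0 nat) \<Rightarrow>\<^sub>0 'k::field"
  assumes "f \<in> polyring s" "f \<noteq> 0"
  shows "lead_exp s f \<in> Poly_Mapping.keys f"
    and "\<And>e. e \<in> Poly_Mapping.keys f \<Longrightarrow> e \<noteq> lead_exp s f \<Longrightarrow> revlex_gt s (lead_exp s f) e"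
proof -
  let ?S = "Poly_Mapping.keys f"
  have "\<exists>x\<in>?S. \<forall>y\<in>?S. y \<noteq> x \<longrightarrow> revlex_gt s x y"
  proof (rule finite_has_greatest_wrt)
    show "finite ?S" "?S \<noteq> {}" using assms(2) by simp_all
    show "\<forall>x\<in>?S. \<forall>y\<in>?S. \<forall>z\<in>?S. revlex_gt s x y \<longrightarrow> revlex_gt s y z \<longrightarrow> revlex_gt s x z"
      using revlex_trans by blast
    show "\<forall>x\<in>?S. \<forall>y\<in>?S. x \<noteq> y \<longrightarrow> revlex_gt s x y \<or> revlex_gt s y x"
      using revlex_total polyring_keys_supp_below[OF assms(1)] by blast
  qed
  then obtain x where x: "x \<in> ?S" "\<forall>y\<in>?S. y \<noteq> x \<longrightarrow> revlex_gt s x y" by blast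
  have "lead_exp s f = x"
    unfolding lead_exp_def
  proof (rule the_equality)
    show "x \<in> ?S \<and> (\<forall>e'\<in>?S. e' \<noteq> x \<longrightarrow> revlex_gt s x e')" using x by blast
    show "e = x" if e: "e \<in> ?S \<and> (\<forall>e'\<in>?S. e' \<noteq> e \<longrightarrow> revlex_gt s e e')" for e
    proof (rule ccontr)
      assume "e \<noteq> x"
      then have "revlex_gt s e x" "revlex_gt s x e" using e x by auto
      then show False using revlex_asym by blast
    qed
  qed
  then show "lead_exp s f \<in> ?S"
    and "\<And>e. e \<in> ?S \<Longrightarrow> e \<noteq> lead_exp s f \<Longrightarrow> revlex_gt s (lead_exp s f) e"
    using x by auto
qed

lemma lead_exp_congruent_smaller:
  fixes f :: "(nat \<Rightarrow>\<^sub>0 nat) \<Rightarrow>\<^sub>0 'k::field"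
  assumes lat: "is_lattice s L" and f: "f \<in> lattice_ideal s L" "f \<noteq> 0"
  shows "\<exists>e\<in>Poly_Mapping.keys f. lattice_cong L e (lead_exp s f) \<and> revlex_gt s (lead_exp s f) e"
proof -
  have fp: "f \<in> polyring s" using f(1) lattice_ideal_subset_polyring by blast
  let ?l = "lead_exp s f"
  let ?C = "{e\<in>Poly_Mapping.keys f. lattice_cong L e ?l}"
  have "(\<Sum>e\<in>?C. Poly_Mapping.lookup f e) = 0"
    using lattice_ideal_coeff_sum_on_class[OF lat f(1)] by (simp add: coeff_sum_on_def)
  moreover have "?l \<in> ?C" using lead_exp_spec(1)[OF fp f(2)] lattice_cong_refl[OF lat] by blast
  moreover have "Poly_Mapping.lookup f ?l \<noteq> 0" using lead_exp_spec(1)[OF fp f(2)] by (simp add: in_keys_iff)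
  ultimately have "?C \<noteq> {?l}" by auto
  then obtain e where "e \<in> ?C" "e \<noteq> ?l" using \<open>?l \<in> ?C\<close> by blast
  then show ?thesis using lead_exp_spec(2)[OF fp f(2)] by blast
qed

lemma monomial_in_initial_idealE:
  fixes J :: "((nat \<Rightarrow>\<^sub>0 nat) \<Rightarrow>\<^sub>0 'k::field) set"
  assumes "monomial_t m \<in> initial_ideal s J"
  obtains f r where "f \<in> J" "f \<noteq> 0" "m = r + lead_exp s f"
proof -
  obtain F c where F: "finite F" "F \<subseteq> {monomial_t (lead_exp s f) | f. f \<in> J \<and> f \<noteq> 0}"
    "(monomial_t m :: _ \<Rightarrow>\<^sub>0 'k) = (\<Sum>g\<in>F. c g * g)"
    using assms by (auto simp: initial_ideal_def ideal_gen_def)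
  have "Poly_Mapping.lookup (monomial_t m :: _ \<Rightarrow>\<^sub>0 'k) m = 1" by (simp add: monomial_t_def)
  then have "(\<Sum>g\<in>F. Poly_Mapping.lookup (c g * g) m) \<noteq> 0" using F(3) by (simp add: lookup_sum)
  then obtain g where g: "g \<in> F" "Poly_Mapping.lookup (c g * g) m \<noteq> 0" by (meson sum.neutral)
  obtain f where f: "f \<in> J" "f \<noteq> 0" "g = monomial_t (lead_exp s f)" using F(2) g(1) by blast
  have "m \<in> Poly_Mapping.keys (c g * g)" using g(2) by (simp add: in_keys_iff)
  then have "m \<in> {a + b | a b. a \<in> Poly_Mapping.keys (c g) \<and> b \<in> Poly_Mapping.keys g}"
    using keys_mult by blast
  then show ?thesis using f that by (auto simp: monomial_t_def)
qed

text \<open>If \<open>c \<equiv> m\<close> is revlex-smaller than \<open>m\<close>, then \<open>t\<^sup>m - t\<^sup>c \<in> I(L)\<close> has leading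
  term \<open>t\<^sup>m\<close>.\<close>

lemma monomial_in_initial_idealI:
  assumes lat: "is_lattice s L" and sm: "supp_below s m" and sc: "supp_below s c"
    and cong: "lattice_cong L c m" and ne: "c \<noteq> m" and gt: "revlex_gt s m c"
  shows "(monomial_t m :: (nat \<Rightarrow>\<^sub>0 nat) \<Rightarrow>\<^sub>0 'k::field) \<in> initial_ideal s (lattice_ideal s L)"
proof -
  define a where "a = (\<lambda>i. int (Poly_Mapping.lookup m i) - int (Poly_Mapping.lookup c i))"
  have aL: "a \<in> L" using lattice_cong_sym[OF lat cong] by (simp add: lattice_cong_def a_def)
  define w where "w = exp_of s (\<lambda>i. min (Poly_Mapping.lookup m i) (Poly_Mapping.lookup c i))"
  have mw: "m = w + pos_part s a"
    by (rule poly_mapping_eqI)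
      (use sm in \<open>auto simp: w_def lookup_add lookup_exp_of lookup_pos_part a_def supp_below_def\<close>)
  have cw: "c = w + neg_part s a"
    by (rule poly_mapping_eqI)
      (use sc in \<open>auto simp: w_def lookup_add lookup_exp_of lookup_neg_part a_def supp_below_def\<close>)
  have wp: "(monomial_t w :: _ \<Rightarrow>\<^sub>0 'k) \<in> polyring s"
    unfolding w_def by (intro polyring_monomial supp_below_exp_of) simp
  define f :: "(nat \<Rightarrow>\<^sub>0 nat) \<Rightarrow>\<^sub>0 'k" where "f = monomial_t m - monomial_t c"
  have "f = monomial_t w * (monomial_t (pos_part s a) - monomial_t (neg_part s a))"
    unfolding f_def monomial_t_def by (simp add: right_diff_distrib mult_single mw cw add.commute)
  then have fJ: "f \<in> lattice_ideal s L"
    unfolding lattice_ideal_def ideal_gen_def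
    using aL wp
    by (intro CollectI exI[of _ "{monomial_t (pos_part s a) - monomial_t (neg_part s a)}"]
        exI[of _ "\<lambda>_. monomial_t w"]) auto
  have "Poly_Mapping.lookup f m = 1"
    using ne by (simp add: f_def monomial_t_def lookup_minus lookup_single)
  then have f0: "f \<noteq> 0" and m_key: "m \<in> Poly_Mapping.keys f" by (auto simp: in_keys_iff)
  have fp: "f \<in> polyring s" using fJ lattice_ideal_subset_polyring by blast
  have keys_f: "Poly_Mapping.keys f \<subseteq> {m, c}"
    unfolding f_def monomial_t_def using keys_diff by fastforce
  have "lead_exp s f = m"
  proof (rule ccontr)
    assume "lead_exp s f \<noteq> m"
    then have "lead_exp s f = c" using lead_exp_spec(1)[OF fp f0] keys_f by blast
    then show False using lead_exp_spec(2)[OF fp f0 m_key] ne revlex_asym[OF gt] by auto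
  qed
  then show ?thesis
    unfolding initial_ideal_def using fJ f0 by (intro monomial_in_ideal_gen) blast
qed

lemma monomial_in_initial_idealD:
  assumes lat: "is_lattice s L" and sm: "supp_below s m"
    and "(monomial_t m :: (nat \<Rightarrow>\<^sub>0 nat) \<Rightarrow>\<^sub>0 'k::field) \<in> initial_ideal s (lattice_ideal s L)"
  shows "\<exists>c. supp_below s c \<and> lattice_cong L c m \<and> c \<noteq> m \<and> revlex_gt s m c"
proof -
  obtain f :: "(nat \<Rightarrow>\<^sub>0 nat) \<Rightarrow>\<^sub>0 'k" and r
    where f: "f \<in> lattice_ideal s L" "f \<noteq> 0" and m: "m = r + lead_exp s f"
    using monomial_in_initial_idealE[OF assms(3)] by blast
  obtain e where e: "e \<in> Poly_Mapping.keys f" "lattice_cong L e (lead_exp s f)"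
      "revlex_gt s (lead_exp s f) e"
    using lead_exp_congruent_smaller[OF lat f] by blast
  have "supp_below s e"
    using f(1) lattice_ideal_subset_polyring e(1) polyring_keys_supp_below by blast
  moreover have "supp_below s r" using sm m by (auto simp: supp_below_def lookup_add)
  moreover have "lattice_cong L (e + r) m"
    using e(2) m lattice_cong_add_right[of L e r "lead_exp s f"] by (simp add: add.commute)
  moreover have "revlex_gt s m (e + r)"
    using e(3) m revlex_add_right[of s "lead_exp s f" r e] by (simp add: add.commute)
  moreover have "e + r \<noteq> m" using calculation(4) revlex_irrefl by metis
  ultimately show ?thesis using supp_below_add by blast
qed

definition revlex_minimal :: "nat \<Rightarrow> (nat \<Rightarrow> int) set \<Rightarrow> (nat \<Rightarrow>\<^sub>0 nat) \<Rightarrow> bool" where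
  "revlex_minimal s L m \<longleftrightarrow>
     (\<forall>c. supp_below s c \<longrightarrow> lattice_cong L c m \<longrightarrow> c \<noteq> m \<longrightarrow> \<not> revlex_gt s m c)"

lemma monomial_notin_initial_ideal_iff:
  assumes "is_lattice s L" "supp_below s m"
  shows "(monomial_t m :: (nat \<Rightarrow>\<^sub>0 nat) \<Rightarrow>\<^sub>0 'k::field) \<notin> initial_ideal s (lattice_ideal s L)
    \<longleftrightarrow> revlex_minimal s L m"
  using monomial_in_initial_idealI[OF assms] monomial_in_initial_idealD[OF assms]
  unfolding revlex_minimal_def by blast

section \<open>Standard representatives of torsion classes\<close>

definition trunc_exp :: "nat \<Rightarrow> (nat \<Rightarrow> int) \<Rightarrow> nat \<Rightarrow>\<^sub>0 nat" where
  "trunc_exp s a = exp_of (s - 1) (\<lambda>i. nat (a i))"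

lemma lookup_trunc_exp: "Poly_Mapping.lookup (trunc_exp s a) i = (if i < s - 1 then nat (a i) else 0)"
  by (simp add: trunc_exp_def lookup_exp_of)

lemma supp_below_trunc_exp: "supp_below s (trunc_exp s a)"
  unfolding trunc_exp_def by (rule supp_below_exp_of) simp

lemma int_lookup_trunc_exp_diff:
  assumes "a \<in> Zs s" "\<forall>i<s - 1. 0 \<le> a i" "b \<in> Zs s" "\<forall>i<s - 1. 0 \<le> b i"
  shows "int (Poly_Mapping.lookup (trunc_exp s a) i) - int (Poly_Mapping.lookup (trunc_exp s b) i)
    = (if i = s - 1 then 0 else a i - b i)"
  using assms by (cases "i < s - 1") (auto simp: lookup_trunc_exp Zs_def)

lemma revlex_minimal_rep_last_le:
  assumes s: "0 < s"
    and a: "a \<in> Zs s" "\<forall>i<s - 1. 0 \<le> a i"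
    and b: "b \<in> Zs s" "\<forall>i<s - 1. 0 \<le> b i" "revlex_minimal s L (trunc_exp s b)"
    and ab: "(\<lambda>i. a i - b i) \<in> L"
  shows "a (s - 1) \<le> b (s - 1)"
proof (rule ccontr)
  assume "\<not> a (s - 1) \<le> b (s - 1)"
  define k where "k = nat (a (s - 1) - b (s - 1))"
  have k: "0 < k" "int k = a (s - 1) - b (s - 1)" using \<open>\<not> _\<close> by (simp_all add: k_def)
  text \<open>Moving the surplus of the last coordinate of \<open>a\<close> into the exponent gives a monomial
    congruent to \<open>t\<^bsup>trunc_exp s b\<^esup>\<close> but with a larger power of \<open>t\<^sub>s\<close>, hence revlex-smaller.\<close>
  define c where "c = trunc_exp s a + Poly_Mapping.single (s - 1) k"
  have lookup_c: "Poly_Mapping.lookup c i = Poly_Mapping.lookup (trunc_exp s a) i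
      + (if i = s - 1 then k else 0)" for i
    by (simp add: c_def lookup_add lookup_single when_def)
  have "supp_below s c"
    using supp_below_trunc_exp[of s a] s by (auto simp: supp_below_def lookup_c)
  moreover have "lattice_cong L c (trunc_exp s b)"
  proof -
    have "(\<lambda>i. int (Poly_Mapping.lookup c i) - int (Poly_Mapping.lookup (trunc_exp s b) i))
        = (\<lambda>i. a i - b i)"
      using int_lookup_trunc_exp_diff[OF a b(1,2)] k(2) by (auto simp: fun_eq_iff lookup_c)
    then show ?thesis using ab by (simp add: lattice_cong_def)
  qed
  moreover have "Poly_Mapping.lookup c (s - 1) = k" "Poly_Mapping.lookup (trunc_exp s b) (s - 1) = 0"
    by (simp_all add: lookup_c lookup_trunc_exp)
  then have "c \<noteq> trunc_exp s b" "revlex_gt s (trunc_exp s b) c"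
    using k(1) s unfolding revlex_gt_def by (auto intro!: exI[of _ "s - 1"])
  ultimately show False using b(3) by (auto simp: revlex_minimal_def)
qed

lemma revlex_minimal_rep_unique:
  assumes lat: "is_lattice s L" and s: "0 < s"
    and a: "a \<in> Zs s" "\<forall>i<s - 1. 0 \<le> a i" "revlex_minimal s L (trunc_exp s a)"
    and b: "b \<in> Zs s" "\<forall>i<s - 1. 0 \<le> b i" "revlex_minimal s L (trunc_exp s b)"
    and ab: "(\<lambda>i. a i - b i) \<in> L"
  shows "a = b"
proof -
  have "(\<lambda>i. b i - a i) \<in> L" using lattice_uminus[OF lat ab] by simp
  then have last: "a (s - 1) = b (s - 1)"
    using revlex_minimal_rep_last_le[OF s a(1,2) b ab]
      revlex_minimal_rep_last_le[OF s b(1,2) a] by simp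
  have cong: "lattice_cong L (trunc_exp s a) (trunc_exp s b)"
  proof -
    have "(\<lambda>i. int (Poly_Mapping.lookup (trunc_exp s a) i)
        - int (Poly_Mapping.lookup (trunc_exp s b) i)) = (\<lambda>i. a i - b i)"
      using int_lookup_trunc_exp_diff[OF a(1,2) b(1,2)] last by (auto simp: fun_eq_iff)
    then show ?thesis using ab by (simp add: lattice_cong_def)
  qed
  have "trunc_exp s a = trunc_exp s b"
  proof (rule ccontr)
    assume ne: "trunc_exp s a \<noteq> trunc_exp s b"
    have "\<not> revlex_gt s (trunc_exp s a) (trunc_exp s b)"
      using a(3) supp_below_trunc_exp lattice_cong_sym[OF lat cong] not_sym[OF ne]
      unfolding revlex_minimal_def by blast
    moreover have "\<not> revlex_gt s (trunc_exp s b) (trunc_exp s a)"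
      using b(3) supp_below_trunc_exp cong ne unfolding revlex_minimal_def by blast
    ultimately show False using revlex_total[OF supp_below_trunc_exp supp_below_trunc_exp ne] by blast
  qed
  show "a = b"
  proof
    fix i
    have "(if i = s - 1 then 0 else a i - b i) = 0"
      using int_lookup_trunc_exp_diff[OF a(1,2) b(1,2), of i] \<open>trunc_exp s a = trunc_exp s b\<close>
      by simp
    then show "a i = b i" using last by (cases "i = s - 1") auto
  qed
qed

text \<open>Exponents \<open>c\<close> with \<open>c - d e\<^sub>s \<in> \<alpha> + L\<close>, i.e.\ for which \<open>t\<^sup>c / t\<^sub>s\<^sup>d\<close> represents
  the class of \<open>\<alpha>\<close>.\<close>

definition rep_fiber :: "nat \<Rightarrow> (nat \<Rightarrow> int) set \<Rightarrow> (nat \<Rightarrow> int) \<Rightarrow> nat \<Rightarrow> (nat \<Rightarrow>\<^sub>0 nat) set" where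
  "rep_fiber s L \<alpha> d = {c. supp_below s c \<and>
     (\<lambda>i. int (Poly_Mapping.lookup c i) - \<alpha> i - (if i = s - 1 then int d else 0)) \<in> L}"

lemma rep_fiber_cong:
  assumes lat: "is_lattice s L" and c: "c \<in> rep_fiber s L \<alpha> d"
    and "supp_below s c'" "lattice_cong L c' c"
  shows "c' \<in> rep_fiber s L \<alpha> d"
proof -
  have "(\<lambda>i. (int (Poly_Mapping.lookup c' i) - int (Poly_Mapping.lookup c i)) +
      (int (Poly_Mapping.lookup c i) - \<alpha> i - (if i = s - 1 then int d else 0))) \<in> L"
    using assms by (intro lattice_add[OF lat]) (simp_all add: lattice_cong_def rep_fiber_def)
  moreover have "(\<lambda>i. (int (Poly_Mapping.lookup c' i) - int (Poly_Mapping.lookup c i)) +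
      (int (Poly_Mapping.lookup c i) - \<alpha> i - (if i = s - 1 then int d else 0)))
    = (\<lambda>i. int (Poly_Mapping.lookup c' i) - \<alpha> i - (if i = s - 1 then int d else 0))"
    by (simp add: fun_eq_iff)
  ultimately show ?thesis using assms(3) by (simp add: rep_fiber_def)
qed

lemma rep_fiber_degree:
  assumes hom: "homogeneous_lattice s L" and "0 < s" and \<alpha>: "(\<Sum>i<s. \<alpha> i) = 0"
    and c: "c \<in> rep_fiber s L \<alpha> d"
  shows "(\<Sum>i<s. int (Poly_Mapping.lookup c i)) = int d"
proof -
  have "(\<Sum>i<s. int (Poly_Mapping.lookup c i) - \<alpha> i - (if i = s - 1 then int d else 0)) = 0"
    using hom c by (simp add: homogeneous_lattice_def rep_fiber_def)
  then show ?thesis using \<alpha> \<open>0 < s\<close> by (simp add: sum_subtractf)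
qed

lemma finite_bounded_exps: "finite {c. supp_below s c \<and> (\<forall>i. Poly_Mapping.lookup c i \<le> d)}"
proof (rule finite_subset)
  let ?lists = "{xs. set xs \<subseteq> {0..d} \<and> length xs = s}"
  show "{c. supp_below s c \<and> (\<forall>i. Poly_Mapping.lookup c i \<le> d)}
      \<subseteq> (\<lambda>xs. exp_of s (\<lambda>i. xs ! i)) ` ?lists"
  proof
    fix c assume c: "c \<in> {c. supp_below s c \<and> (\<forall>i. Poly_Mapping.lookup c i \<le> d)}"
    then have "c = exp_of s (\<lambda>i. map (Poly_Mapping.lookup c) [0..<s] ! i)"
      by (intro poly_mapping_eqI) (auto simp: lookup_exp_of supp_below_def)
    moreover have "map (Poly_Mapping.lookup c) [0..<s] \<in> ?lists" using c by auto
    ultimately show "c \<in> (\<lambda>xs. exp_of s (\<lambda>i. xs ! i)) ` ?lists" by blast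
  qed
  show "finite ((\<lambda>xs. exp_of s (\<lambda>i. xs ! i)) ` ?lists)"
    by (intro finite_imageI finite_lists_length_eq) auto
qed

lemma rep_fiber_lookup_le:
  assumes "homogeneous_lattice s L" "0 < s" "(\<Sum>i<s. \<alpha> i) = 0"
    and c: "c \<in> rep_fiber s L \<alpha> d"
  shows "Poly_Mapping.lookup c i \<le> d"
proof (cases "i < s")
  case True
  then have "int (Poly_Mapping.lookup c i) \<le> (\<Sum>i<s. int (Poly_Mapping.lookup c i))"
    by (intro member_le_sum) auto
  then show ?thesis using rep_fiber_degree[OF assms] by simp
next
  case False
  then show ?thesis using c by (simp add: rep_fiber_def supp_below_def)
qed

lemma finite_rep_fiber:
  assumes "homogeneous_lattice s L" "0 < s" "(\<Sum>i<s. \<alpha> i) = 0"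
  shows "finite (rep_fiber s L \<alpha> d)"
  using rep_fiber_lookup_le[OF assms]
  by (intro finite_subset[OF _ finite_bounded_exps[of s d]]) (auto simp: rep_fiber_def)

lemma rep_fiber_lower:
  assumes "0 < s" and c: "c \<in> rep_fiber s L \<alpha> d"
    and "0 < Poly_Mapping.lookup c (s - 1)" "0 < d"
  shows "c - Poly_Mapping.single (s - 1) 1 \<in> rep_fiber s L \<alpha> (d - 1)"
proof -
  have eq: "(\<lambda>i. int (Poly_Mapping.lookup (c - Poly_Mapping.single (s - 1) 1) i) - \<alpha> i
        - (if i = s - 1 then int (d - 1) else 0))
      = (\<lambda>i. int (Poly_Mapping.lookup c i) - \<alpha> i - (if i = s - 1 then int d else 0))"
    using assms(3,4) by (auto simp: fun_eq_iff lookup_minus lookup_single of_nat_diff)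
  have "supp_below s (c - Poly_Mapping.single (s - 1) 1)"
    using c \<open>0 < s\<close> by (auto simp: rep_fiber_def supp_below_def lookup_minus lookup_single)
  then show ?thesis
    using c unfolding rep_fiber_def mem_Collect_eq eq by blast
qed

lemma rep_fiber_nonempty:
  assumes s2: "s \<ge> 2" and lat: "is_lattice s L" and hom: "homogeneous_lattice s L"
    and rk: "lattice_rank_eq s L (s - 1)" and \<alpha>: "\<alpha> \<in> Zs s"
  shows "\<exists>d. rep_fiber s L \<alpha> d \<noteq> {}"
proof -
  text \<open>Add a large multiple of \<open>(1, \<dots>, 1, 1 - s) \<in> \<int>\<^sup>s\<close>, which some multiple puts into
    \<open>L\<close>, to \<open>\<alpha>\<close> and then shift the last coordinate by \<open>d\<close> to make everything nonnegative.\<close>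
  define h :: "nat \<Rightarrow> int" where "h i = (if i < s - 1 then 1 else if i = s - 1 then 1 - int s else 0)" for i
  have "{..<s} = insert (s - 1) {..<s - 1}" using s2 by auto
  then have "(\<Sum>i<s. h i) = h (s - 1) + (\<Sum>i<s - 1. h i)" by simp
  then have "(\<Sum>i<s. h i) = 0" using s2 by (simp add: h_def of_nat_diff)
  moreover have "h \<in> Zs s" using s2 by (auto simp: Zs_def h_def)
  ultimately obtain M :: int where M: "M > 0" "(\<lambda>i. M * h i) \<in> L"
    using homogeneous_vector_multiple_in_lattice[OF s2 lat hom rk] by blast
  define K where "K = (\<Sum>i<s. \<bar>\<alpha> i\<bar>)"
  have K: "\<bar>\<alpha> i\<bar> \<le> K * M" if "i < s" for i
  proof -
    have "\<bar>\<alpha> i\<bar> \<le> K" unfolding K_def using that by (intro member_le_sum) auto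
    also have "\<dots> \<le> K * M"
      using mult_left_mono[of 1 M K] M(1) by (simp add: K_def sum_nonneg)
    finally show ?thesis .
  qed
  define d where "d = nat (\<bar>\<alpha> (s - 1)\<bar> + K * M * (int s - 1))"
  have d: "int d = \<bar>\<alpha> (s - 1)\<bar> + K * M * (int s - 1)"
    unfolding d_def using K[of 0] s2 by (intro int_nat_eq[THEN trans]) simp
  define v where "v i = \<alpha> i + K * (M * h i) + (if i = s - 1 then int d else 0)" for i
  have v_nonneg: "0 \<le> v i" if "i < s" for i
    using K[OF that] that d by (cases "i < s - 1") (auto simp: v_def h_def algebra_simps)
  have "(\<lambda>i. int (Poly_Mapping.lookup (exp_of s (\<lambda>i. nat (v i))) i) - \<alpha> i
      - (if i = s - 1 then int d else 0)) = (\<lambda>i. K * (M * h i))"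
  proof
    fix i
    show "int (Poly_Mapping.lookup (exp_of s (\<lambda>i. nat (v i))) i) - \<alpha> i
      - (if i = s - 1 then int d else 0) = K * (M * h i)"
    proof (cases "i < s")
      case True
      then show ?thesis using v_nonneg[OF True] by (simp add: lookup_exp_of v_def)
    next
      case False
      then show ?thesis using \<alpha> s2 by (auto simp: lookup_exp_of h_def Zs_def)
    qed
  qed
  then have "exp_of s (\<lambda>i. nat (v i)) \<in> rep_fiber s L \<alpha> d"
    using lattice_smult[OF lat M(2)] by (simp add: rep_fiber_def supp_below_exp_of)
  then show ?thesis by blast
qed

lemma revlex_minimal_rep_exists:
  assumes s2: "s \<ge> 2" and lat: "is_lattice s L" and hom: "homogeneous_lattice s L"
    and rk: "lattice_rank_eq s L (s - 1)" and \<alpha>: "\<alpha> \<in> Zs s" "(\<Sum>i<s. \<alpha> i) = 0"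
  shows "\<exists>a. a \<in> Zs s \<and> (\<forall>i<s - 1. 0 \<le> a i) \<and> revlex_minimal s L (trunc_exp s a) \<and>
    (\<lambda>i. a i - \<alpha> i) \<in> L"
proof -
  have s: "0 < s" using s2 by simp
  define d where "d = (LEAST d. rep_fiber s L \<alpha> d \<noteq> {})"
  have ne: "rep_fiber s L \<alpha> d \<noteq> {}"
    unfolding d_def by (rule LeastI_ex) (rule rep_fiber_nonempty[OF s2 lat hom rk \<alpha>(1)])
  have below: "d' < d \<Longrightarrow> rep_fiber s L \<alpha> d' = {}" for d'
    unfolding d_def using not_less_Least by blast
  let ?F = "rep_fiber s L \<alpha> d"
  have "\<exists>m\<in>?F. \<forall>c\<in>?F. c \<noteq> m \<longrightarrow> revlex_gt s c m"
  proof (rule finite_has_greatest_wrt[where R = "\<lambda>x y. revlex_gt s y x"])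
    show "finite ?F" by (rule finite_rep_fiber[OF hom s \<alpha>(2)])
    show "?F \<noteq> {}" by (rule ne)
    show "\<forall>x\<in>?F. \<forall>y\<in>?F. \<forall>z\<in>?F. revlex_gt s y x \<longrightarrow> revlex_gt s z y \<longrightarrow> revlex_gt s z x"
      using revlex_trans by blast
    show "\<forall>x\<in>?F. \<forall>y\<in>?F. x \<noteq> y \<longrightarrow> revlex_gt s y x \<or> revlex_gt s x y"
      using revlex_total by (auto simp: rep_fiber_def)
  qed
  then obtain m where m: "m \<in> ?F" "\<And>c. c \<in> ?F \<Longrightarrow> c \<noteq> m \<Longrightarrow> revlex_gt s c m" by blast
  have sm: "supp_below s m" using m(1) by (simp add: rep_fiber_def)
  have m_last: "Poly_Mapping.lookup m (s - 1) = 0"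
  proof (rule ccontr)
    assume "Poly_Mapping.lookup m (s - 1) \<noteq> 0"
    moreover have "Poly_Mapping.lookup m (s - 1) \<le> d"
      by (rule rep_fiber_lookup_le[OF hom s \<alpha>(2) m(1)])
    ultimately have "m - Poly_Mapping.single (s - 1) 1 \<in> rep_fiber s L \<alpha> (d - 1)" "d - 1 < d"
      using rep_fiber_lower[OF s m(1)] by simp_all
    then show False using below by blast
  qed
  define a where "a i = (if i < s - 1 then int (Poly_Mapping.lookup m i)
      else if i = s - 1 then - int d else 0)" for i
  have m_beyond: "Poly_Mapping.lookup m i = 0" if "\<not> i < s - 1" for i
    using that m_last sm by (cases "i = s - 1") (auto simp: supp_below_def)
  have "trunc_exp s a = m"
    by (rule poly_mapping_eqI) (simp add: lookup_trunc_exp a_def m_beyond)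
  moreover have "(\<lambda>i. a i - \<alpha> i)
      = (\<lambda>i. int (Poly_Mapping.lookup m i) - \<alpha> i - (if i = s - 1 then int d else 0))"
    by (simp add: fun_eq_iff a_def m_beyond)
  then have "(\<lambda>i. a i - \<alpha> i) \<in> L" using m(1) by (simp add: rep_fiber_def)
  moreover have "revlex_minimal s L m"
    unfolding revlex_minimal_def
  proof (intro allI impI)
    fix c assume "supp_below s c" "lattice_cong L c m" "c \<noteq> m"
    then have "revlex_gt s c m" using m(2) rep_fiber_cong[OF lat m(1)] by blast
    then show "\<not> revlex_gt s m c" by (rule revlex_asym)
  qed
  moreover have "a \<in> Zs s" "\<forall>i<s - 1. 0 \<le> a i" using s by (auto simp: a_def Zs_def)
  ultimately show ?thesis by blast
qed

theorem lemma3p10: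
  fixes s :: nat and L :: "(nat \<Rightarrow> int) set" and \<alpha> :: "nat \<Rightarrow> int"
  assumes "s \<ge> 2"
    and "is_lattice s L"
    and "homogeneous_lattice s L"
    and "lattice_rank_eq s L (s - 1)"
    and "\<alpha> \<in> Zs s"
    and "\<exists>n::int. n > 0 \<and> (\<lambda>i. n * \<alpha> i) \<in> L"
  shows "\<exists>!a. a \<in> Zs s \<and> (\<forall>i < s - 1. a i \<ge> 0) \<and>
           (monomial_t (Abs_poly_mapping (\<lambda>i. if i < s - 1 then nat (a i) else 0)) :: (nat \<Rightarrow>\<^sub>0 nat) \<Rightarrow>\<^sub>0 'k::field)
              \<notin> initial_ideal s (lattice_ideal s L :: ((nat \<Rightarrow>\<^sub>0 nat) \<Rightarrow>\<^sub>0 'k) set) \<and>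
           (\<lambda>i. a i - \<alpha> i) \<in> L"
proof -
  note lat = assms(2) and hom = assms(3)
  obtain n :: int where n: "n > 0" "(\<lambda>i. n * \<alpha> i) \<in> L" using assms(6) by blast
  have "n * (\<Sum>i<s. \<alpha> i) = 0"
    using hom n(2) by (simp add: homogeneous_lattice_def sum_distrib_left)
  then have \<alpha>_sum: "(\<Sum>i<s. \<alpha> i) = 0" using n(1) by simp
  have "Abs_poly_mapping (\<lambda>i. if i < s - 1 then nat (a i) else 0) = trunc_exp s a" for a
    by (simp add: trunc_exp_def exp_of_def)
  then have standard_iff: "(monomial_t (Abs_poly_mapping (\<lambda>i. if i < s - 1 then nat (a i) else 0))
        :: (nat \<Rightarrow>\<^sub>0 nat) \<Rightarrow>\<^sub>0 'k) \<notin> initial_ideal s (lattice_ideal s L)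
      \<longleftrightarrow> revlex_minimal s L (trunc_exp s a)" for a
    using monomial_notin_initial_ideal_iff[OF lat supp_below_trunc_exp] by metis
  have unique: "a = b"
    if "a \<in> Zs s" "\<forall>i<s - 1. 0 \<le> a i" "revlex_minimal s L (trunc_exp s a)" "(\<lambda>i. a i - \<alpha> i) \<in> L"
      and "b \<in> Zs s" "\<forall>i<s - 1. 0 \<le> b i" "revlex_minimal s L (trunc_exp s b)" "(\<lambda>i. b i - \<alpha> i) \<in> L"
    for a b
    using that lattice_diff[OF lat that(4) that(8)] assms(1)
    by (intro revlex_minimal_rep_unique[OF lat]) simp_all
  show ?thesis
    unfolding standard_iff
    using revlex_minimal_rep_exists[OF assms(1-5) \<alpha>_sum] unique by blast
qed

end
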